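(* Let $\mathbf{a}$ be a CSCA and $n\in\mathbb{N}$. Then $\mathbf{a}$ possesses gliders with eigenvalues $u^n$ and $u^{-n}$ (i.e. there exist non-zero $\xi,\eta\in\mathcal{P}^2$ with $\mathbf{a}\xi=u^n\xi$ and $\mathbf{a}\eta=u^{-n}\eta$) if and only if $\mathrm{tr}\,\mathbf{a}=u^{-n}+u^n$.
   Context: $\mathcal{P}$ denotes the ring of Laurent polynomials in $u$ over $\mathbb{Z}_2$; $\mathcal{R}$ is the subring of palindromes ($p(u^{-1})=p(u)$). A CSCA (centered symplectic cellular automaton) is a $2\times2$ matrix with entries in $\mathcal{R}$ and determinant $1$, acting on $\mathcal{P}^2$ by matrix multiplication. *)

theory Defs
  imports "HOL-Analysis.Analysis" "HOL-Library.Poly_Mapping" "HOL-Library.Z2"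
begin

text \<open>Laurent polynomials in u over Z_2: finitely supported maps int => Z_2
  with convolution product (the group ring Z_2[Z]).\<close>
type_synonym laurent = "int \<Rightarrow>\<^sub>0 bit"

definition u :: laurent where "u = Poly_Mapping.single 1 1"
definition u_inv :: laurent where "u_inv = Poly_Mapping.single (-1) 1"

definition palindrome :: "laurent \<Rightarrow> bool" where
  "palindrome p \<longleftrightarrow> (\<forall>k. Poly_Mapping.lookup p (-k) = Poly_Mapping.lookup p k)"

definition CSCA :: "laurent^2^2 \<Rightarrow> bool" where
  "CSCA A \<longleftrightarrow> (\<forall>i j. palindrome (A $ i $ j)) \<and> det A = 1"

end

theory Submission
  imports Defs
begin

(* For a 2x2 matrix over a domain, l is an eigenvalue exactly when
   det (A - l I) = l^2 - (tr A) l + det A vanishes; a nonzero solution of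
   B x = 0 for det B = 0 can be read off from a nonzero row of B (or B = 0).
   If det A = 1 and l is a unit with inverse m, this characteristic value is
   l (l + m - tr A). So u^n is an eigenvalue iff tr A = u^n + u^-n, a condition
   symmetric in u^n and u^-n: either eigenvalue forces the trace condition,
   and the trace condition yields both. *)

lemma det2_minus_mat:
  fixes A :: "'a::comm_ring_1^2^2"
  shows "det (A - mat l) = l * l - trace A * l + det A"
  by (simp add: det_2 trace_def sum_2 mat_def algebra_simps)

lemma matrix_vector_mult_mat: "mat l *v x = l *s (x :: 'a::semiring_1^'n)"
  by (simp add: vec_eq_iff matrix_vector_mult_def mat_def if_distrib if_distribR
      cong del: if_weak_cong)

lemma eigenvector_iff_kernel:
  fixes A :: "'a::comm_ring_1^'n^'n"
  shows "A *v x = l *s x \<longleftrightarrow> (A - mat l) *v x = 0"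
  by (simp add: matrix_vector_mult_diff_rdistrib matrix_vector_mult_mat)

lemma det2_scale_kernel:
  fixes B :: "'a::comm_ring_1^2^2"
  assumes "B *v x = 0"
  shows "det B *s x = 0"
proof -
  have r1: "B$1$1 * x$1 + B$1$2 * x$2 = 0" and r2: "B$2$1 * x$1 + B$2$2 * x$2 = 0"
    using assms by (auto simp: vec_eq_iff forall_2 matrix_vector_mult_def sum_2)
  \<comment> \<open>multiply the system by the adjugate of B\<close>
  have "det B * x$1 = B$2$2 * (B$1$1 * x$1 + B$1$2 * x$2) - B$1$2 * (B$2$1 * x$1 + B$2$2 * x$2)"
    and "det B * x$2 = B$1$1 * (B$2$1 * x$1 + B$2$2 * x$2) - B$2$1 * (B$1$1 * x$1 + B$1$2 * x$2)"
    by (simp_all add: det_2 algebra_simps)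
  with r1 r2 show ?thesis by (simp add: vec_eq_iff forall_2)
qed

lemma det2_zero_imp_kernel:
  fixes B :: "'a::comm_ring_1^2^2"
  assumes "det B = 0"
  obtains x where "x \<noteq> 0" "B *v x = 0"
proof -
  have mv: "B *v x = vector [B$1$1 * x$1 + B$1$2 * x$2, B$2$1 * x$1 + B$2$2 * x$2]" for x
    by (simp add: vec_eq_iff forall_2 matrix_vector_mult_def sum_2)
  have det: "B$1$1 * B$2$2 = B$1$2 * B$2$1"
    using assms by (simp add: det_2)
  consider "B$1$1 \<noteq> 0 \<or> B$1$2 \<noteq> 0" | "B$2$1 \<noteq> 0 \<or> B$2$2 \<noteq> 0" | "B = 0"
    by (auto simp: vec_eq_iff forall_2)
  then show thesis
  proof cases
    case 1
    show thesis
      by (rule that[of "vector [B$1$2, - B$1$1]"])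
        (use 1 det in \<open>auto simp: vec_eq_iff forall_2 mv algebra_simps\<close>)
  next
    case 2
    show thesis
      by (rule that[of "vector [B$2$2, - B$2$1]"])
        (use 2 det in \<open>auto simp: vec_eq_iff forall_2 mv algebra_simps\<close>)
  next
    case 3
    show thesis
      by (rule that[of "vector [1, 0]"]) (auto simp: 3 vec_eq_iff forall_2)
  qed
qed

lemma has_eigenvector2_iff:
  fixes A :: "'a::idom^2^2"
  shows "(\<exists>x. x \<noteq> 0 \<and> A *v x = l *s x) \<longleftrightarrow> det (A - mat l) = 0"
proof
  assume "\<exists>x. x \<noteq> 0 \<and> A *v x = l *s x"
  then obtain x where "x \<noteq> 0" "(A - mat l) *v x = 0"
    by (auto simp: eigenvector_iff_kernel)
  then show "det (A - mat l) = 0"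
    using det2_scale_kernel by (fastforce simp: vec_eq_iff)
next
  assume "det (A - mat l) = 0"
  then show "\<exists>x. x \<noteq> 0 \<and> A *v x = l *s x"
    by (metis det2_zero_imp_kernel eigenvector_iff_kernel)
qed

lemma unimodular_det2_minus_unit:
  fixes A :: "'a::comm_ring_1^2^2"
  assumes "det A = 1" and "l * m = 1"
  shows "det (A - mat l) = 0 \<longleftrightarrow> trace A = l + m"
proof -
  have "det (A - mat l) = l * (l + m - trace A)"
    using assms by (simp add: det2_minus_mat algebra_simps)
  moreover have "l * y = 0 \<longleftrightarrow> y = 0" for y
    by (metis assms(2) mult.left_commute mult_1_right mult_zero_right mult.commute)
  ultimately show ?thesis by (metis right_minus_eq)
qed

lemma u_mult_u_inv: "u * u_inv = 1"
  by (simp add: u_def u_inv_def mult_single one_poly_mapping_def)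

theorem mainTheorem3:
  fixes A :: "laurent^2^2" and n :: nat
  assumes "CSCA A"
  shows "((\<exists>\<xi>::laurent^2. \<xi> \<noteq> 0 \<and> A *v \<xi> = (u ^ n) *s \<xi>) \<and>
          (\<exists>\<eta>::laurent^2. \<eta> \<noteq> 0 \<and> A *v \<eta> = (u_inv ^ n) *s \<eta>))
         \<longleftrightarrow> trace A = u_inv ^ n + u ^ n"
proof -
  have det: "det A = 1" using assms by (simp add: CSCA_def)
  have inv: "u ^ n * u_inv ^ n = 1" "u_inv ^ n * u ^ n = 1"
    by (simp_all add: u_mult_u_inv mult.commute flip: power_mult_distrib)
  show ?thesis
    unfolding has_eigenvector2_iff unimodular_det2_minus_unit[OF det inv(1)]
      unimodular_det2_minus_unit[OF det inv(2)]
    by (auto simp: add.commute)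
qed

end
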